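(* Let $A,X^1,\ldots,X^m\in M_n(\mathbb{C})$ with $1\le m\le n$. Then $$D^m\operatorname{per}(A)(X^1,\ldots,X^m)=m!\sum_{\mathcal{I},\mathcal{J}\in Q_{m,n}}\operatorname{per}A(\mathcal{I}|\mathcal{J})\,\Delta_p\big(X^1[\mathcal{I}|\mathcal{J}],\ldots,X^m[\mathcal{I}|\mathcal{J}]\big).$$
   Context: $\operatorname{per}$ is the permanent; $D^m\operatorname{per}(A)(X^1,\ldots,X^m)=\frac{\partial^m}{\partial t_1\cdots\partial t_m}\big|_{t=0}\operatorname{per}(A+t_1X^1+\cdots+t_mX^m)$. $Q_{m,n}=\{(i_1,\ldots,i_m):1\le i_1<\cdots<i_m\le n\}$. $X[\mathcal{I}|\mathcal{J}]$ is the $m\times m$ matrix with $(r,s)$-entry $x_{i_rj_s}$; $A(\mathcal{I}|\mathcal{J})$ is $A$ with rows $\mathcal{I}$ and columns $\mathcal{J}$ deleted (permanent of a $0\times0$ matrix is $1$). For $m\times m$ matrices $T^1,\ldots,T^m$, $\Delta_p(T^1,\ldots,T^m)=\frac{1}{m!}\sum_{\sigma\in S_m}\operatorname{per}\big[T^{\sigma(1)}_{[1]},\ldots,T^{\sigma(m)}_{[m]}\big]$, where $T_{[j]}$ is the $j$-th column of $T$. *)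

theory Defs
  imports "HOL-Analysis.Analysis"
begin

text \<open>Square matrices of size n are functions nat => nat => complex, only entries
  with indices in {0..<n} are relevant (0-based indexing).\<close>

definition per :: "nat \<Rightarrow> (nat \<Rightarrow> nat \<Rightarrow> complex) \<Rightarrow> complex" where
  "per n A = (\<Sum>p | p permutes {0..<n}. \<Prod>i<n. A i (p i))"

fun mixed_partial :: "nat \<Rightarrow> ((nat \<Rightarrow> complex) \<Rightarrow> complex) \<Rightarrow> (nat \<Rightarrow> complex) \<Rightarrow> complex" where
  "mixed_partial 0 F = F"
| "mixed_partial (Suc k) F = (\<lambda>t. deriv (\<lambda>s. mixed_partial k F (t(k := s))) (t k))"

text \<open>D^m per(A)(X^1,...,X^m), with X^k indexed by k = 0..m-1 and t_k the corresponding variable.\<close>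
definition Dper :: "nat \<Rightarrow> nat \<Rightarrow> (nat \<Rightarrow> nat \<Rightarrow> complex) \<Rightarrow> (nat \<Rightarrow> nat \<Rightarrow> nat \<Rightarrow> complex) \<Rightarrow> complex" where
  "Dper m n A X = mixed_partial m
     (\<lambda>t. per n (\<lambda>i j. A i j + (\<Sum>k<m. t k * X k i j))) (\<lambda>_. 0)"

text \<open>Q_{m,n} as the m-element subsets of {0..<n}; an index set is read in increasing order.\<close>
definition Q :: "nat \<Rightarrow> nat \<Rightarrow> nat set set" where
  "Q m n = {I. I \<subseteq> {0..<n} \<and> card I = m}"

definition submat :: "(nat \<Rightarrow> nat \<Rightarrow> complex) \<Rightarrow> nat set \<Rightarrow> nat set \<Rightarrow> (nat \<Rightarrow> nat \<Rightarrow> complex)" where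
  "submat X I J = (\<lambda>r s. X (sorted_list_of_set I ! r) (sorted_list_of_set J ! s))"

text \<open>A(I|J): rows I and columns J deleted (an (n-m)x(n-m) matrix).\<close>
definition delmat :: "nat \<Rightarrow> (nat \<Rightarrow> nat \<Rightarrow> complex) \<Rightarrow> nat set \<Rightarrow> nat set \<Rightarrow> (nat \<Rightarrow> nat \<Rightarrow> complex)" where
  "delmat n A I J = submat A ({0..<n} - I) ({0..<n} - J)"

definition Delta_p :: "nat \<Rightarrow> (nat \<Rightarrow> nat \<Rightarrow> nat \<Rightarrow> complex) \<Rightarrow> complex" where
  "Delta_p m T = (1 / of_nat (fact m)) *
     (\<Sum>\<sigma> | \<sigma> permutes {0..<m}. per m (\<lambda>r j. T (\<sigma> j) r j))"

end

theory Submission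
  imports Defs
begin

(* Expanding per(A + sum_k t_k X^k) over permutations p and over the choice, for
   every row i, of the summand taken from entry (i, p i) -- either A (label None) or t_k X^k
   (label Some k) -- gives a polynomial in t.  The mixed partial derivative at t = 0 extracts its
   coefficient of t_0 ... t_(m-1), so D^m per(A)(X) is the sum of the weights of all pairs (p, g)
   whose labelling g uses every label k < m exactly once ("good" labellings).

   Writing out per A(I|J) and m! Delta_p (after substituting kappa = sigma o pi)
   gives a sum over tuples (I, J, tau, kappa, pi).  These tuples are in bijection with the pairs
   (p, g): I is the support of g and kappa lists its labels on I; J = p ` I, and pi and tau are the
   restrictions of p to I and to its complement, read in increasing enumerations of the sets. *)

definition enum_set :: "'a::linorder set \<Rightarrow> nat \<Rightarrow> 'a" where
  "enum_set S i = sorted_list_of_set S ! i"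

definition enum_index :: "'a::linorder set \<Rightarrow> 'a \<Rightarrow> nat" where
  "enum_index S = the_inv_into {..<card S} (enum_set S)"

lemma bij_enum_set: "finite S \<Longrightarrow> bij_betw (enum_set S) {..<card S} S"
  unfolding enum_set_def by (rule bij_betw_nth) auto

lemma bij_enum_index: "finite S \<Longrightarrow> bij_betw (enum_index S) S {..<card S}"
  unfolding enum_index_def by (rule bij_betw_the_inv_into[OF bij_enum_set])

lemma enum_set_enum_index [simp]: "finite S \<Longrightarrow> x \<in> S \<Longrightarrow> enum_set S (enum_index S x) = x"
  unfolding enum_index_def using bij_enum_set[of S] by (auto simp: bij_betw_def f_the_inv_into_f)

lemma enum_index_enum_set [simp]: "finite S \<Longrightarrow> i < card S \<Longrightarrow> enum_index S (enum_set S i) = i"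
  unfolding enum_index_def using bij_enum_set[of S] by (auto simp: bij_betw_def the_inv_into_f_f)

lemma enum_set_in: "finite S \<Longrightarrow> i < card S \<Longrightarrow> enum_set S i \<in> S"
  using bij_enum_set[of S] by (auto simp: bij_betw_def)

lemma enum_index_less: "finite S \<Longrightarrow> x \<in> S \<Longrightarrow> enum_index S x < card S"
  using bij_enum_index[of S] by (auto simp: bij_betw_def)

lemma enum_set_lessThan [simp]: "i < m \<Longrightarrow> enum_set {..<m} i = i"
  by (simp add: enum_set_def lessThan_atLeast0)

(* A permutation pi of {..<card I} induces, via the enumerations, a bijection I -> J;
   conversely a bijection p : I -> J is read as the permutation block_perm I J p. *)
definition transfer :: "'a::linorder set \<Rightarrow> 'b::linorder set \<Rightarrow> (nat \<Rightarrow> nat) \<Rightarrow> 'a \<Rightarrow> 'b" where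
  "transfer I J \<pi> x = enum_set J (\<pi> (enum_index I x))"

definition block_perm :: "'a::linorder set \<Rightarrow> 'b::linorder set \<Rightarrow> ('a \<Rightarrow> 'b) \<Rightarrow> nat \<Rightarrow> nat" where
  "block_perm I J p r = (if r < card I then enum_index J (p (enum_set I r)) else r)"

lemma bij_transfer:
  assumes "finite I" "finite J" "card J = card I" "\<pi> permutes {..<card I}"
  shows "bij_betw (transfer I J \<pi>) I J"
proof -
  have "bij_betw (enum_set J) {..<card I} J" using bij_enum_set[OF assms(2)] assms(3) by simp
  then have "bij_betw (enum_set J \<circ> (\<pi> \<circ> enum_index I)) I J"
    by (rule bij_betw_trans[OF bij_betw_trans[OF bij_enum_index[OF assms(1)] permutes_imp_bij[OF assms(4)]]])
  then show ?thesis by (simp add: comp_def transfer_def[abs_def])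
qed

lemma block_perm_permutes:
  assumes "finite I" "bij_betw p I J"
  shows "block_perm I J p permutes {..<card I}"
proof (rule bij_imp_permutes)
  have fJ: "finite J" using bij_betw_finite assms by blast
  have "bij_betw (enum_index J) J {..<card I}"
    using bij_enum_index[OF fJ] bij_betw_same_card[OF assms(2)] by simp
  then have "bij_betw (enum_index J \<circ> (p \<circ> enum_set I)) {..<card I} {..<card I}"
    by (rule bij_betw_trans[OF bij_betw_trans[OF bij_enum_set[OF assms(1)] assms(2)]])
  then show "bij_betw (block_perm I J p) {..<card I} {..<card I}"
    by (rule bij_betw_cong[THEN iffD1, rotated]) (simp add: block_perm_def)
next
  show "x \<notin> {..<card I} \<Longrightarrow> block_perm I J p x = x" for x
    by (simp add: block_perm_def)
qed

lemma block_perm_cong: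
  "finite I \<Longrightarrow> (\<And>x. x \<in> I \<Longrightarrow> p x = q x) \<Longrightarrow> block_perm I J p = block_perm I J q"
  by (auto simp: block_perm_def enum_set_in)

lemma block_perm_transfer:
  assumes "finite I" "finite J" "card J = card I" "\<pi> permutes {..<card I}"
  shows "block_perm I J (transfer I J \<pi>) = \<pi>"
proof
  fix r show "block_perm I J (transfer I J \<pi>) r = \<pi> r"
    using assms permutes_in_image[OF assms(4)] permutes_not_in[OF assms(4)]
    by (simp add: block_perm_def transfer_def)
qed

lemma transfer_block_perm:
  assumes "finite I" "bij_betw p I J" "x \<in> I"
  shows "transfer I J (block_perm I J p) x = p x"
proof -
  have "finite J" "p x \<in> J" using assms bij_betw_finite bij_betwE by blast+
  then show ?thesis using assms by (simp add: transfer_def block_perm_def enum_index_less)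
qed

abbreviation perms :: "nat \<Rightarrow> (nat \<Rightarrow> nat) set" where
  "perms k \<equiv> {p. p permutes {..<k}}"

lemma mem_Q: "I \<in> Q m n \<longleftrightarrow> I \<subseteq> {..<n} \<and> card I = m"
  by (simp add: Q_def atLeast0LessThan)

lemma Q_finite: "I \<in> Q m n \<Longrightarrow> finite I"
  by (auto simp: mem_Q intro: finite_subset)

lemma Q_complement: "I \<in> Q m n \<Longrightarrow> finite ({..<n} - I) \<and> card ({..<n} - I) = n - m"
  using finite_subset[of I "{..<n}"] by (auto simp: mem_Q card_Diff_subset)

(* A labelling assigns to each row i < n either None (take the entry of A) or Some k (take the
   entry of X^k); it is good if every label k < m is used by exactly one row. *)
definition labels :: "nat \<Rightarrow> nat option set" where
  "labels m = insert None (Some ` {..<m})"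

definition label_count :: "nat \<Rightarrow> (nat \<Rightarrow> nat option) \<Rightarrow> nat \<Rightarrow> nat" where
  "label_count n g k = card {i. i < n \<and> g i = Some k}"

definition good_labellings :: "nat \<Rightarrow> nat \<Rightarrow> (nat \<Rightarrow> nat option) set" where
  "good_labellings m n = {g \<in> {..<n} \<rightarrow>\<^sub>E labels m. \<forall>k<m. label_count n g k = 1}"

definition support :: "nat \<Rightarrow> (nat \<Rightarrow> nat option) \<Rightarrow> nat set" where
  "support n g = {i. i < n \<and> g i \<noteq> None}"

definition label :: "nat \<Rightarrow> nat set \<Rightarrow> (nat \<Rightarrow> nat) \<Rightarrow> nat \<Rightarrow> nat option" where
  "label n I \<kappa> = restrict (\<lambda>i. if i \<in> I then Some (\<kappa> (enum_index I i)) else None) {..<n}"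

lemma card_preimage_bij:
  assumes "bij_betw h A B" "k \<in> B"
  shows "card {i \<in> A. h i = k} = 1"
proof -
  obtain a where "a \<in> A" "h a = k" using assms by (auto simp: bij_betw_def)
  then have "{i \<in> A. h i = k} = {a}" using assms(1) by (auto simp: bij_betw_def inj_on_def)
  then show ?thesis by simp
qed

lemma label_good:
  assumes I: "I \<in> Q m n" and \<kappa>: "\<kappa> permutes {..<m}"
  shows "label n I \<kappa> \<in> good_labellings m n"
proof -
  have fI: "finite I" and Is: "I \<subseteq> {..<n}" "card I = m" using I by (auto simp: Q_finite mem_Q)
  have bij: "bij_betw (\<kappa> \<circ> enum_index I) I {..<m}"
    using bij_enum_index[OF fI] permutes_imp_bij[OF \<kappa>] Is by (metis bij_betw_trans)
  have "label_count n (label n I \<kappa>) k = 1" if "k < m" for k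
  proof -
    have "{i. i < n \<and> label n I \<kappa> i = Some k} = {i \<in> I. (\<kappa> \<circ> enum_index I) i = k}"
      using Is by (auto simp: label_def)
    then show ?thesis using card_preimage_bij[OF bij] that by (simp add: label_count_def)
  qed
  moreover have "label n I \<kappa> \<in> {..<n} \<rightarrow>\<^sub>E labels m"
    using bij_betwE[OF bij] by (auto simp: label_def labels_def)
  ultimately show ?thesis by (simp add: good_labellings_def)
qed

lemma bij_good_labelling:
  assumes g: "g \<in> good_labellings m n"
  shows "bij_betw (\<lambda>i. the (g i)) (support n g) {..<m}"
proof -
  have val: "\<exists>k<m. g i = Some k" if "i \<in> support n g" for i
    using g that PiE_mem[of g "{..<n}" "\<lambda>_. labels m" i]
    by (auto simp: good_labellings_def support_def labels_def)
  have fibre: "\<exists>!i. i < n \<and> g i = Some k" if "k < m" for k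
  proof -
    have "card {i. i < n \<and> g i = Some k} = 1" using g that by (simp add: good_labellings_def label_count_def)
    then obtain a where "{i. i < n \<and> g i = Some k} = {a}" by (auto simp: card_1_singleton_iff)
    then have "\<forall>i. (i < n \<and> g i = Some k) \<longleftrightarrow> i = a" by (simp add: set_eq_iff)
    then show ?thesis by auto
  qed
  show ?thesis
  proof (rule bij_betw_imageI)
    show "inj_on (\<lambda>i. the (g i)) (support n g)"
    proof (rule inj_onI)
      fix x y assume x: "x \<in> support n g" and y: "y \<in> support n g" and eq: "the (g x) = the (g y)"
      obtain k where k: "k < m" "g x = Some k" using val[OF x] by auto
      obtain k' where k': "g y = Some k'" using val[OF y] by auto
      with k(2) eq have "g y = Some k" by simp
      moreover have "x < n" "y < n" using x y by (auto simp: support_def)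
      ultimately show "x = y" using fibre[OF k(1)] k(2) by blast
    qed
    show "(\<lambda>i. the (g i)) ` support n g = {..<m}"
    proof
      show "(\<lambda>i. the (g i)) ` support n g \<subseteq> {..<m}"
        using val by fastforce
      show "{..<m} \<subseteq> (\<lambda>i. the (g i)) ` support n g"
      proof
        fix k assume "k \<in> {..<m}"
        then obtain i where "i < n" "g i = Some k" using fibre by blast
        then show "k \<in> (\<lambda>i. the (g i)) ` support n g"
          by (intro rev_image_eqI[of i]) (auto simp: support_def)
      qed
    qed
  qed
qed

lemma support_good_labelling: "g \<in> good_labellings m n \<Longrightarrow> support n g \<in> Q m n"
  using bij_betw_same_card[OF bij_good_labelling] by (auto simp: mem_Q support_def)

lemma support_label: "I \<subseteq> {..<n} \<Longrightarrow> support n (label n I \<kappa>) = I"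
  by (auto simp: support_def label_def)

lemma label_inverse:
  assumes I: "I \<in> Q m n" and \<kappa>: "\<kappa> permutes {..<m}"
  shows "block_perm I {..<m} (\<lambda>i. the (label n I \<kappa> i)) = \<kappa>"
proof -
  have fI: "finite I" and Is: "I \<subseteq> {..<n}" "card I = m" using I by (auto simp: Q_finite mem_Q)
  have "block_perm I {..<m} (\<lambda>i. the (label n I \<kappa> i)) = block_perm I {..<m} (transfer I {..<m} \<kappa>)"
    using Is fI enum_index_less[OF fI] permutes_in_image[OF \<kappa>]
    by (intro block_perm_cong) (auto simp: label_def transfer_def)
  also have "\<dots> = \<kappa>" using block_perm_transfer[of I "{..<m}" \<kappa>] fI Is \<kappa> by simp
  finally show ?thesis .
qed

lemma label_decompose:
  assumes g: "g \<in> good_labellings m n"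
  shows "label n (support n g) (block_perm (support n g) {..<m} (\<lambda>i. the (g i))) = g"
proof
  fix i
  define I where "I = support n g"
  have bij: "bij_betw (\<lambda>i. the (g i)) I {..<m}" using bij_good_labelling[OF g] by (simp add: I_def)
  have fI: "finite I" by (simp add: I_def support_def)
  have "card I = m" using bij_betw_same_card[OF bij] by simp
  then have "block_perm I {..<m} (\<lambda>i. the (g i)) permutes {..<m}"
    using block_perm_permutes[OF fI bij] by simp
  then have bound: "block_perm I {..<m} (\<lambda>i. the (g i)) (enum_index I i) < m" if "i \<in> I" for i
    using enum_index_less[OF fI that] \<open>card I = m\<close> permutes_in_image by fastforce
  show "label n I (block_perm I {..<m} (\<lambda>i. the (g i))) i = g i"
  proof (cases "i \<in> I")
    case True
    then have "block_perm I {..<m} (\<lambda>i. the (g i)) (enum_index I i) = the (g i)"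
      using transfer_block_perm[OF fI bij True] bound[OF True] by (simp add: transfer_def)
    then show ?thesis using True by (auto simp: label_def I_def support_def)
  next
    case False
    then show ?thesis using g PiE_arb[of g "{..<n}" "\<lambda>_. labels m" i]
      by (auto simp: label_def I_def support_def good_labellings_def)
  qed
qed

lemma sum_good_labellings:
  "(\<Sum>g\<in>good_labellings m n. F g) = (\<Sum>I\<in>Q m n. \<Sum>\<kappa>\<in>perms m. F (label n I \<kappa>))"
proof -
  have "(\<Sum>g\<in>good_labellings m n. F g) = (\<Sum>(I, \<kappa>)\<in>Q m n \<times> perms m. F (label n I \<kappa>))"
  proof (rule sum.reindex_bij_witness[where
        j = "\<lambda>g. (support n g, block_perm (support n g) {..<m} (\<lambda>i. the (g i)))"
        and i = "\<lambda>(I, \<kappa>). label n I \<kappa>"], goal_cases)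
    case (1 g) then show ?case by (simp add: label_decompose)
  next
    case (2 g) then show ?case
      using support_good_labelling[OF 2] block_perm_permutes[OF _ bij_good_labelling[OF 2]]
      by (auto simp: mem_Q support_def)
  next
    case (3 x) then show ?case by (auto simp: mem_Q support_label label_inverse)
  next
    case (4 x) then show ?case by (auto simp: label_good)
  next
    case (5 g) then show ?case by (simp add: label_decompose)
  qed
  then show ?thesis by (simp add: sum.cartesian_product)
qed

definition glue :: "nat \<Rightarrow> nat set \<Rightarrow> nat set \<Rightarrow> (nat \<Rightarrow> nat) \<Rightarrow> (nat \<Rightarrow> nat) \<Rightarrow> nat \<Rightarrow> nat" where
  "glue n I J \<pi> \<tau> i = (if i \<in> I then transfer I J \<pi> i
     else if i < n then transfer ({..<n} - I) ({..<n} - J) \<tau> i else i)"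

lemma bij_glue:
  assumes I: "I \<in> Q m n" and J: "J \<in> Q m n" and \<pi>: "\<pi> permutes {..<m}" and \<tau>: "\<tau> permutes {..<n - m}"
  shows "bij_betw (glue n I J \<pi> \<tau>) I J"
    and "bij_betw (glue n I J \<pi> \<tau>) ({..<n} - I) ({..<n} - J)"
proof -
  have "bij_betw (transfer I J \<pi>) I J"
    using I J \<pi> by (intro bij_transfer) (auto simp: Q_finite mem_Q)
  then show "bij_betw (glue n I J \<pi> \<tau>) I J"
    by (rule bij_betw_cong[THEN iffD1, rotated]) (simp add: glue_def)
  have "bij_betw (transfer ({..<n} - I) ({..<n} - J) \<tau>) ({..<n} - I) ({..<n} - J)"
    using Q_complement[OF I] Q_complement[OF J] \<tau> by (intro bij_transfer) auto
  then show "bij_betw (glue n I J \<pi> \<tau>) ({..<n} - I) ({..<n} - J)"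
    by (rule bij_betw_cong[THEN iffD1, rotated]) (simp add: glue_def)
qed

lemma glue_permutes:
  assumes "I \<in> Q m n" "J \<in> Q m n" "\<pi> permutes {..<m}" "\<tau> permutes {..<n - m}"
  shows "glue n I J \<pi> \<tau> permutes {..<n}"
proof (rule bij_imp_permutes)
  have "I \<union> ({..<n} - I) = {..<n}" "J \<union> ({..<n} - J) = {..<n}"
    using assms(1,2) by (auto simp: mem_Q)
  then show "bij_betw (glue n I J \<pi> \<tau>) {..<n} {..<n}"
    using bij_betw_combine[OF bij_glue[OF assms]] by auto
  show "x \<notin> {..<n} \<Longrightarrow> glue n I J \<pi> \<tau> x = x" for x
    using assms(1) by (auto simp: glue_def mem_Q)
qed

lemma bij_betw_permutes_blocks:
  assumes p: "p permutes {..<n}" and I: "I \<subseteq> {..<n}"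
  shows "bij_betw p I (p ` I)" and "bij_betw p ({..<n} - I) ({..<n} - p ` I)"
proof -
  have inj: "inj p" using p by (rule permutes_inj)
  show "bij_betw p I (p ` I)" using inj by (simp add: bij_betw_imageI inj_on_subset)
  have "p ` ({..<n} - I) = {..<n} - p ` I"
    using image_set_diff[OF inj] permutes_image[OF p] by simp
  then show "bij_betw p ({..<n} - I) ({..<n} - p ` I)"
    using inj by (metis bij_betw_imageI inj_on_subset subset_UNIV)
qed

lemma glue_inverse:
  assumes I: "I \<in> Q m n" and J: "J \<in> Q m n" and \<pi>: "\<pi> permutes {..<m}" and \<tau>: "\<tau> permutes {..<n - m}"
  shows "glue n I J \<pi> \<tau> ` I = J"
    and "block_perm I J (glue n I J \<pi> \<tau>) = \<pi>"
    and "block_perm ({..<n} - I) ({..<n} - J) (glue n I J \<pi> \<tau>) = \<tau>"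
proof -
  show "glue n I J \<pi> \<tau> ` I = J" using bij_glue(1)[OF assms] by (simp add: bij_betw_def)
  have "block_perm I J (glue n I J \<pi> \<tau>) = block_perm I J (transfer I J \<pi>)"
    using Q_finite[OF I] by (intro block_perm_cong) (auto simp: glue_def)
  also have "\<dots> = \<pi>"
    using I J \<pi> by (intro block_perm_transfer) (auto simp: Q_finite mem_Q)
  finally show "block_perm I J (glue n I J \<pi> \<tau>) = \<pi>" .
  have "block_perm ({..<n} - I) ({..<n} - J) (glue n I J \<pi> \<tau>)
      = block_perm ({..<n} - I) ({..<n} - J) (transfer ({..<n} - I) ({..<n} - J) \<tau>)"
    using Q_complement[OF I] by (intro block_perm_cong) (auto simp: glue_def)
  also have "\<dots> = \<tau>"
    using Q_complement[OF I] Q_complement[OF J] \<tau> by (intro block_perm_transfer) auto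
  finally show "block_perm ({..<n} - I) ({..<n} - J) (glue n I J \<pi> \<tau>) = \<tau>" .
qed

lemma glue_decompose:
  assumes p: "p permutes {..<n}" and I: "I \<subseteq> {..<n}"
  shows "glue n I (p ` I) (block_perm I (p ` I) p) (block_perm ({..<n} - I) ({..<n} - p ` I) p) = p"
proof
  fix i
  have fI: "finite I" "finite ({..<n} - I)" using I finite_subset by auto
  note bI = bij_betw_permutes_blocks(1)[OF p I] and bC = bij_betw_permutes_blocks(2)[OF p I]
  show "glue n I (p ` I) (block_perm I (p ` I) p) (block_perm ({..<n} - I) ({..<n} - p ` I) p) i = p i"
    using transfer_block_perm[OF fI(1) bI] transfer_block_perm[OF fI(2) bC] permutes_not_in[OF p]
    by (simp add: glue_def)
qed

lemma sum_perms_split: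
  assumes I: "I \<in> Q m n"
  shows "(\<Sum>p\<in>perms n. F p) =
    (\<Sum>J\<in>Q m n. \<Sum>\<pi>\<in>perms m. \<Sum>\<tau>\<in>perms (n - m). F (glue n I J \<pi> \<tau>))"
proof -
  have Is: "I \<subseteq> {..<n}" "card I = m" using I by (auto simp: mem_Q)
  have "(\<Sum>p\<in>perms n. F p) = (\<Sum>(J, \<pi>, \<tau>)\<in>Q m n \<times> perms m \<times> perms (n - m). F (glue n I J \<pi> \<tau>))"
  proof (rule sum.reindex_bij_witness[where
        j = "\<lambda>p. (p ` I, block_perm I (p ` I) p, block_perm ({..<n} - I) ({..<n} - p ` I) p)"
        and i = "\<lambda>(J, \<pi>, \<tau>). glue n I J \<pi> \<tau>"], goal_cases)
    case (1 p) then show ?case using glue_decompose Is by simp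
  next
    case (2 p)
    then have p: "p permutes {..<n}" by simp
    note bI = bij_betw_permutes_blocks(1)[OF p Is(1)] and bC = bij_betw_permutes_blocks(2)[OF p Is(1)]
    have "p ` I \<in> Q m n"
      using Is permutes_image[OF p] bij_betw_same_card[OF bI] by (auto simp: mem_Q)
    then show ?case
      using block_perm_permutes[OF Q_finite[OF I] bI] block_perm_permutes[OF _ bC] Q_complement[OF I] Is
      by simp
  next
    case (3 x)
    then obtain J \<pi> \<tau> where "x = (J, \<pi>, \<tau>)" "J \<in> Q m n" "\<pi> permutes {..<m}" "\<tau> permutes {..<n - m}"
      by auto
    then show ?case using glue_inverse[OF I] by simp
  next
    case (4 x) then show ?case using glue_permutes[OF I] by auto
  next
    case (5 p) then show ?case using glue_decompose Is by simp
  qed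
  then show ?thesis by (simp add: sum.cartesian_product)
qed

definition weight :: "nat \<Rightarrow> (nat \<Rightarrow> nat \<Rightarrow> complex) \<Rightarrow> (nat \<Rightarrow> nat \<Rightarrow> nat \<Rightarrow> complex)
    \<Rightarrow> (nat \<Rightarrow> nat) \<Rightarrow> (nat \<Rightarrow> nat option) \<Rightarrow> complex" where
  "weight n A X p g = (\<Prod>i<n. case g i of None \<Rightarrow> A i (p i) | Some k \<Rightarrow> X k i (p i))"

lemma prod_labels:
  fixes t :: "nat \<Rightarrow> 'a::comm_monoid_mult"
  assumes "\<forall>i<n. g i \<in> labels m"
  shows "(\<Prod>i<n. case g i of None \<Rightarrow> 1 | Some k \<Rightarrow> t k) = (\<Prod>k<m. t k ^ label_count n g k)"
  using assms
proof (induction n)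
  case 0
  then show ?case by (simp add: label_count_def)
next
  case (Suc n)
  have label_count_Suc: "label_count (Suc n) g k = label_count n g k + (if g n = Some k then 1 else 0)" for k
  proof -
    have "{i. i < Suc n \<and> g i = Some k} = {i. i < n \<and> g i = Some k} \<union> (if g n = Some k then {n} else {})"
      by (auto simp: less_Suc_eq)
    then show ?thesis unfolding label_count_def by (simp add: card_insert_if)
  qed
  have "(\<Prod>k<m. t k ^ (if g n = Some k then 1 else 0)) = (case g n of None \<Rightarrow> 1 | Some k \<Rightarrow> t k)"
  proof (cases "g n")
    case (Some k0)
    then have "k0 < m" using Suc.prems by (auto simp: labels_def)
    have "(\<Prod>k<m. t k ^ (if g n = Some k then 1 else 0)) = (\<Prod>k<m. if k = k0 then t k else 1)"
      using Some by (intro prod.cong) auto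
    then show ?thesis using Some \<open>k0 < m\<close> by (simp add: prod.delta)
  qed simp
  then show ?case using Suc by (simp add: label_count_Suc power_add prod.distrib)
qed

lemma per_perturbed_expansion:
  "per n (\<lambda>i j. A i j + (\<Sum>k<m. t k * X k i j)) =
    (\<Sum>p\<in>perms n. \<Sum>g\<in>{..<n} \<rightarrow>\<^sub>E labels m. weight n A X p g * (\<Prod>k<m. t k ^ label_count n g k))"
proof -
  define w where "w p i v = (case v of None \<Rightarrow> A i (p i) | Some k \<Rightarrow> t k * X k i (p i))" for p i v
  have entry: "A i (p i) + (\<Sum>k<m. t k * X k i (p i)) = (\<Sum>v\<in>labels m. w p i v)" for p i
    by (simp add: labels_def w_def sum.reindex)
  have summand: "(\<Prod>i<n. w p i (g i)) = weight n A X p g * (\<Prod>k<m. t k ^ label_count n g k)"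
    if "g \<in> {..<n} \<rightarrow>\<^sub>E labels m" for p g
  proof -
    have "(\<Prod>i<n. w p i (g i)) = (\<Prod>i<n. (case g i of None \<Rightarrow> A i (p i) | Some k \<Rightarrow> X k i (p i))
         * (case g i of None \<Rightarrow> 1 | Some k \<Rightarrow> t k))"
      by (intro prod.cong) (auto simp: w_def split: option.split)
    also have "\<dots> = weight n A X p g * (\<Prod>i<n. case g i of None \<Rightarrow> 1 | Some k \<Rightarrow> t k)"
      by (simp only: prod.distrib weight_def)
    also have "\<dots> = weight n A X p g * (\<Prod>k<m. t k ^ label_count n g k)"
      using that by (subst prod_labels[of n g m]) auto
    finally show ?thesis .
  qed
  have "per n (\<lambda>i j. A i j + (\<Sum>k<m. t k * X k i j)) = (\<Sum>p\<in>perms n. \<Prod>i<n. \<Sum>v\<in>labels m. w p i v)"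
    unfolding per_def by (simp add: entry atLeast0LessThan)
  also have "\<dots> = (\<Sum>p\<in>perms n. \<Sum>g\<in>{..<n} \<rightarrow>\<^sub>E labels m. \<Prod>i<n. w p i (g i))"
    by (intro sum.cong refl prod_sum_PiE) (auto simp: labels_def)
  finally show ?thesis by (simp add: summand)
qed

(* The factor that t_k ^ e becomes after differentiating once in each of t_0, ..., t_(j-1). *)
definition partial_power :: "nat \<Rightarrow> nat \<Rightarrow> nat \<Rightarrow> complex \<Rightarrow> complex" where
  "partial_power j k e x = (if k < j then of_nat e * x ^ (e - 1) else x ^ e)"

lemma mixed_partial_polynomial:
  fixes G :: "'g set" and c :: "'g \<Rightarrow> complex" and e :: "'g \<Rightarrow> nat \<Rightarrow> nat"
  assumes "finite G" and "j \<le> m"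
  shows "mixed_partial j (\<lambda>t. \<Sum>x\<in>G. c x * (\<Prod>k<m. t k ^ e x k))
     = (\<lambda>t. \<Sum>x\<in>G. c x * (\<Prod>k<m. partial_power j k (e x k) (t k)))"
  using assms(2)
proof (induction j)
  case 0
  then show ?case by (simp add: partial_power_def)
next
  case (Suc j)
  then have jm: "j < m" by simp
  show ?case
  proof
    fix t :: "nat \<Rightarrow> complex"
    define R where "R x = (\<Prod>k\<in>{..<m}-{j}. partial_power j k (e x k) (t k))" for x
    have split: "(\<Prod>k<m. f k) = f j * (\<Prod>k\<in>{..<m}-{j}. f k)" for f :: "nat \<Rightarrow> complex"
      using jm by (subst prod.remove[of _ j]) auto
    have slice: "mixed_partial j (\<lambda>t. \<Sum>x\<in>G. c x * (\<Prod>k<m. t k ^ e x k)) (t(j := s))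
        = (\<Sum>x\<in>G. (c x * R x) * s ^ e x j)" for s
    proof -
      have "(\<Prod>k<m. partial_power j k (e x k) ((t(j:=s)) k)) = s ^ e x j * R x" for x
        by (subst split) (auto simp: R_def partial_power_def intro!: prod.cong)
      then show ?thesis using Suc by (simp add: mult_ac)
    qed
    have "((\<lambda>s. \<Sum>x\<in>G. (c x * R x) * s ^ e x j) has_field_derivative
        (\<Sum>x\<in>G. (c x * R x) * (of_nat (e x j) * t j ^ (e x j - 1)))) (at (t j))"
      by (auto intro!: derivative_eq_intros sum.cong simp: mult_ac)
    moreover have "(\<Prod>k<m. partial_power (Suc j) k (e x k) (t k)) = (of_nat (e x j) * t j ^ (e x j - 1)) * R x" for x
      unfolding R_def by (subst split) (auto simp: partial_power_def less_Suc_eq intro!: prod.cong)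
    ultimately show "mixed_partial (Suc j) (\<lambda>t. \<Sum>x\<in>G. c x * (\<Prod>k<m. t k ^ e x k)) t
        = (\<Sum>x\<in>G. c x * (\<Prod>k<m. partial_power (Suc j) k (e x k) (t k)))"
      using DERIV_imp_deriv by (simp add: slice mult_ac)
  qed
qed

(* At t = 0 only the monomial t_0 ... t_(m-1) survives m differentiations. *)
lemma partial_power_at_zero:
  "(\<Prod>k<m. partial_power m k (e k) 0) = (if \<forall>k<m. e k = 1 then 1 else 0)"
proof (cases "\<forall>k<m. e k = 1")
  case False
  then obtain k where "k < m" "e k \<noteq> 1" by auto
  then have "partial_power m k (e k) 0 = 0" by (cases "e k") (auto simp: partial_power_def)
  then show ?thesis using False \<open>k < m\<close> by (auto intro: prod_zero)
qed (simp add: partial_power_def)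

lemma Dper_eq_sum_good_labellings:
  "Dper m n A X = (\<Sum>g\<in>good_labellings m n. \<Sum>p\<in>perms n. weight n A X p g)"
proof -
  define G where "G = perms n \<times> ({..<n} \<rightarrow>\<^sub>E labels m)"
  have fG: "finite G" unfolding G_def
    by (intro finite_cartesian_product finite_permutations finite_PiE) (auto simp: labels_def)
  have "(\<lambda>t. per n (\<lambda>i j. A i j + (\<Sum>k<m. t k * X k i j))) =
     (\<lambda>t. \<Sum>(p, g)\<in>G. weight n A X p g * (\<Prod>k<m. t k ^ label_count n g k))"
    by (simp add: per_perturbed_expansion G_def sum.cartesian_product)
  then have "Dper m n A X = (\<Sum>(p, g)\<in>G. weight n A X p g * (\<Prod>k<m. partial_power m k (label_count n g k) 0))"
    unfolding Dper_def using mixed_partial_polynomial[OF fG le_refl,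
        where c = "\<lambda>(p, g). weight n A X p g" and e = "\<lambda>(p, g). label_count n g"]
    by (simp add: case_prod_beta)
  also have "\<dots> = (\<Sum>p\<in>perms n. \<Sum>g\<in>{..<n} \<rightarrow>\<^sub>E labels m.
      if \<forall>k<m. label_count n g k = 1 then weight n A X p g else 0)"
    unfolding G_def sum.cartesian_product partial_power_at_zero
    by (intro sum.cong refl) (simp add: case_prod_beta, blast)
  also have "\<dots> = (\<Sum>p\<in>perms n. \<Sum>g\<in>good_labellings m n. weight n A X p g)"
    unfolding good_labellings_def
    by (rule sum.cong[OF refl], rule sum.inter_filter[symmetric]) (simp add: labels_def finite_PiE)
  finally show ?thesis by (rule trans[OF _ sum.swap])
qed

(* The summand of the fully expanded formula: a term of per A(I|J) (from tau) times a term of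
   m! Delta_p(X[I|J]) (from the label permutation kappa and the permutation pi). *)
definition block_term :: "nat \<Rightarrow> nat \<Rightarrow> (nat \<Rightarrow> nat \<Rightarrow> complex) \<Rightarrow> (nat \<Rightarrow> nat \<Rightarrow> nat \<Rightarrow> complex)
    \<Rightarrow> nat set \<Rightarrow> nat set \<Rightarrow> (nat \<Rightarrow> nat) \<Rightarrow> (nat \<Rightarrow> nat) \<Rightarrow> (nat \<Rightarrow> nat) \<Rightarrow> complex" where
  "block_term m n A X I J \<kappa> \<pi> \<tau> =
    (\<Prod>i<n - m. A (enum_set ({..<n} - I) i) (enum_set ({..<n} - J) (\<tau> i))) *
    (\<Prod>r<m. X (\<kappa> r) (enum_set I r) (enum_set J (\<pi> r)))"

lemma weight_glue_label:
  assumes I: "I \<in> Q m n"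
  shows "weight n A X (glue n I J \<pi> \<tau>) (label n I \<kappa>) = block_term m n A X I J \<kappa> \<pi> \<tau>"
proof -
  have fI: "finite I" and Is: "I \<subseteq> {..<n}" "card I = m" using I by (auto simp: Q_finite mem_Q)
  note C = Q_complement[OF I]
  define F where "F i = (case label n I \<kappa> i of None \<Rightarrow> A i (glue n I J \<pi> \<tau> i)
      | Some k \<Rightarrow> X k i (glue n I J \<pi> \<tau> i))" for i
  have "weight n A X (glue n I J \<pi> \<tau>) (label n I \<kappa>) = prod F I * prod F ({..<n} - I)"
    unfolding weight_def F_def[symmetric]
    using prod.union_disjoint[of I "{..<n} - I" F] fI C Is by (simp add: Un_absorb1)
  also have "prod F I = (\<Prod>r<m. F (enum_set I r))"
    using prod.reindex_bij_betw[OF bij_enum_set[OF fI], of F] Is by simp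
  also have "\<dots> = (\<Prod>r<m. X (\<kappa> r) (enum_set I r) (enum_set J (\<pi> r)))"
  proof (rule prod.cong[OF refl])
    fix r assume r: "r \<in> {..<m}"
    then have "enum_set I r \<in> I" using enum_set_in[OF fI] Is by simp
    then show "F (enum_set I r) = X (\<kappa> r) (enum_set I r) (enum_set J (\<pi> r))"
      using Is fI r by (auto simp: F_def label_def glue_def transfer_def)
  qed
  also have "prod F ({..<n} - I) = (\<Prod>i<n - m. F (enum_set ({..<n} - I) i))"
    using prod.reindex_bij_betw[OF bij_enum_set[of "{..<n} - I"], of F] C by simp
  also have "\<dots> = (\<Prod>i<n - m. A (enum_set ({..<n} - I) i) (enum_set ({..<n} - J) (\<tau> i)))"
  proof (rule prod.cong[OF refl])
    fix i assume i: "i \<in> {..<n - m}"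
    then have "enum_set ({..<n} - I) i \<in> {..<n} - I" using enum_set_in[of "{..<n} - I"] C by simp
    then show "F (enum_set ({..<n} - I) i) = A (enum_set ({..<n} - I) i) (enum_set ({..<n} - J) (\<tau> i))"
      using C i by (simp add: F_def label_def glue_def transfer_def)
  qed
  finally show ?thesis by (simp add: block_term_def mult.commute)
qed

lemma fact_Delta_p:
  "of_nat (fact m) * Delta_p m T = (\<Sum>\<kappa>\<in>perms m. \<Sum>\<pi>\<in>perms m. \<Prod>r<m. T (\<kappa> r) r (\<pi> r))"
proof -
  have "of_nat (fact m) * Delta_p m T = (\<Sum>\<sigma>\<in>perms m. \<Sum>\<pi>\<in>perms m. \<Prod>r<m. T (\<sigma> (\<pi> r)) r (\<pi> r))"
    by (simp add: Delta_p_def per_def atLeast0LessThan)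
  also have "\<dots> = (\<Sum>\<pi>\<in>perms m. \<Sum>\<sigma>\<in>perms m. \<Prod>r<m. T ((\<sigma> \<circ> \<pi>) r) r (\<pi> r))"
    by (subst sum.swap) simp
  also have "\<dots> = (\<Sum>\<pi>\<in>perms m. \<Sum>\<kappa>\<in>perms m. \<Prod>r<m. T (\<kappa> r) r (\<pi> r))"
    by (intro sum.cong refl sum_permutations_compose_right[symmetric]) simp
  finally show ?thesis by (rule trans[OF _ sum.swap])
qed

lemma per_delmat:
  "per (n - m) (delmat n A I J) =
    (\<Sum>\<tau>\<in>perms (n - m). \<Prod>i<n - m. A (enum_set ({..<n} - I) i) (enum_set ({..<n} - J) (\<tau> i)))"
  by (simp add: per_def delmat_def submat_def enum_set_def atLeast0LessThan)

lemma rhs_expansion: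
  "of_nat (fact m) * (\<Sum>I\<in>Q m n. \<Sum>J\<in>Q m n.
       per (n - m) (delmat n A I J) * Delta_p m (\<lambda>k. submat (X k) I J)) =
   (\<Sum>I\<in>Q m n. \<Sum>J\<in>Q m n. \<Sum>\<kappa>\<in>perms m. \<Sum>\<pi>\<in>perms m. \<Sum>\<tau>\<in>perms (n - m).
      block_term m n A X I J \<kappa> \<pi> \<tau>)"
proof -
  let ?a = "\<lambda>I J \<tau>. \<Prod>i<n - m. A (enum_set ({..<n} - I) i) (enum_set ({..<n} - J) (\<tau> i))"
  let ?x = "\<lambda>I J \<kappa> \<pi>. \<Prod>r<m. X (\<kappa> r) (enum_set I r) (enum_set J (\<pi> r))"
  have summand: "of_nat (fact m) * (per (n - m) (delmat n A I J) * Delta_p m (\<lambda>k. submat (X k) I J)) =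
      (\<Sum>\<kappa>\<in>perms m. \<Sum>\<pi>\<in>perms m. \<Sum>\<tau>\<in>perms (n - m). ?a I J \<tau> * ?x I J \<kappa> \<pi>)" for I J
  proof -
    have "of_nat (fact m) * (per (n - m) (delmat n A I J) * Delta_p m (\<lambda>k. submat (X k) I J)) =
        per (n - m) (delmat n A I J) * (of_nat (fact m) * Delta_p m (\<lambda>k. submat (X k) I J))"
      by (rule mult.left_commute)
    also have "\<dots> = (\<Sum>\<tau>\<in>perms (n - m). ?a I J \<tau>) * (\<Sum>\<kappa>\<in>perms m. \<Sum>\<pi>\<in>perms m. ?x I J \<kappa> \<pi>)"
      unfolding per_delmat fact_Delta_p by (simp add: submat_def enum_set_def)
    also have "\<dots> = (\<Sum>\<kappa>\<in>perms m. \<Sum>\<pi>\<in>perms m. (\<Sum>\<tau>\<in>perms (n - m). ?a I J \<tau>) * ?x I J \<kappa> \<pi>)"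
      by (simp add: sum_distrib_left)
    also have "\<dots> = (\<Sum>\<kappa>\<in>perms m. \<Sum>\<pi>\<in>perms m. \<Sum>\<tau>\<in>perms (n - m). ?a I J \<tau> * ?x I J \<kappa> \<pi>)"
      by (simp add: sum_distrib_right)
    finally show ?thesis .
  qed
  show ?thesis unfolding sum_distrib_left summand block_term_def ..
qed

lemma Dper_block_expansion:
  "Dper m n A X =
   (\<Sum>I\<in>Q m n. \<Sum>\<kappa>\<in>perms m. \<Sum>J\<in>Q m n. \<Sum>\<pi>\<in>perms m. \<Sum>\<tau>\<in>perms (n - m).
      block_term m n A X I J \<kappa> \<pi> \<tau>)"
proof -
  have "Dper m n A X = (\<Sum>I\<in>Q m n. \<Sum>\<kappa>\<in>perms m. \<Sum>p\<in>perms n. weight n A X p (label n I \<kappa>))"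
    by (simp add: Dper_eq_sum_good_labellings sum_good_labellings)
  also have "\<dots> = (\<Sum>I\<in>Q m n. \<Sum>\<kappa>\<in>perms m. \<Sum>J\<in>Q m n. \<Sum>\<pi>\<in>perms m. \<Sum>\<tau>\<in>perms (n - m).
      weight n A X (glue n I J \<pi> \<tau>) (label n I \<kappa>))"
    by (intro sum.cong[OF refl] sum_perms_split)
  also have "\<dots> = (\<Sum>I\<in>Q m n. \<Sum>\<kappa>\<in>perms m. \<Sum>J\<in>Q m n. \<Sum>\<pi>\<in>perms m. \<Sum>\<tau>\<in>perms (n - m).
      block_term m n A X I J \<kappa> \<pi> \<tau>)"
    by (intro sum.cong refl) (simp add: weight_glue_label)
  finally show ?thesis .
qed

(* The two expansions agree up to the order of the sums over kappa and J. *)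
theorem theorem2p4:
  fixes m n :: nat and A :: "nat \<Rightarrow> nat \<Rightarrow> complex" and X :: "nat \<Rightarrow> nat \<Rightarrow> nat \<Rightarrow> complex"
  assumes "1 \<le> m" and "m \<le> n"
  shows "Dper m n A X = of_nat (fact m) *
    (\<Sum>I\<in>Q m n. \<Sum>J\<in>Q m n.
       per (n - m) (delmat n A I J) * Delta_p m (\<lambda>k. submat (X k) I J))"
  unfolding Dper_block_expansion rhs_expansion
  by (rule sum.cong[OF refl], rule sum.swap)

end
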